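(* In the model described in the context, if correct readers sign their read requests and $\tau\ge 2f+1$, then Algorithm 1 with threshold $t=1$ satisfies both completeness and weak accuracy.
   Context: Model. An asynchronous system has client processes (writers, readers, auditors) and $n$ storage objects $o_1,\dots,o_n$. Each $o_k$ is a linearisable loggable read/write register with a log $L_k$ (initially empty). Its rw-write($b$) stores a block; rw-read() returns the current block and appends $\langle p_r,\mathit{label}(b)\rangle$ to $L_k$, where $p_r$ is the reader and $\mathit{label}(b)$ identifies the value from which $b$ was derived; rw-getLog() returns $L_k$. A multi-writer multi-reader register over values $\mathbb{V}$ is emulated by information dispersal. An a-write($v$) encodes $v$ into $b_{v_1},\dots,b_{v_n}$ with $b_{v_k}$ sent to $o_k$. Any $\tau$ distinct blocks of $v$ recover $v$, and fewer do not. Reads are fast, and concurrency is unlimited. Faults. Writers and auditors can only crash. Faulty readers may crash or contact a subset of objects. At most $f$ objects are faulty; a faulty object may crash, omit its block, omit log records from auditors, and report records of nonexistent reads. Signed reads: correct readers unforgeably sign their read requests, and a record counts only if accompanied by a valid signed request of the named reader. Hence a faulty object cannot create a correct record about a reader from which it never received a signed request. Providing set $P_{p_r,v}$: the set of objects that received a write of $b_{v_k}$ and responded $b_{v_k}$ to a read of $p_r$. The value $v$ is effectively read by $p_r$ iff $|P_{p_r,v}|\ge\tau$. Algorithm 1 (a-audit with threshold $t$): 1. Invoke rw-getLog on all $n$ objects in parallel, and wait for responses from at least $n-f$; let $L[k]$ be the log received from $o_k$. 2. For every record $\langle p_r,\mathit{label}(v)\rangle$ in some $L[k]$, let $\mathcal{E}_{p_r,v}=\{k:\langle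 p_r,\mathit{label}(v)\rangle\in L[k]\}$, and add it to $E_A$ iff $|\mathcal{E}_{p_r,v}|\ge t$. 3. Return $E_A$. Completeness: $|P_{p_r,v}|\ge\tau$ before the audit implies $\mathcal{E}_{p_r,v}\in E_A$. Weak accuracy: for every correct reader $p_r$ that never invoked an a-read before the audit, $\mathcal{E}_{p_r,v}\notin E_A$ for all $v$. *)

theory Defs
  imports Main
begin

text \<open>Objects are o_1..o_n (indices 1..n);
time is discrete (nat). Readers have type 'p, values type 'v; a log record
is a pair (reader, label of value), labels identified with values.\<close>

record ('p, 'v) execution =
  faulty_obj :: "nat set"
  correct_rd :: "'p \<Rightarrow> bool"
  wrote :: "nat \<Rightarrow> 'v \<Rightarrow> nat \<Rightarrow> bool"          \<comment> \<open>o_k received write of b_{v_k} at time t\<close>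
  served :: "nat \<Rightarrow> 'p \<Rightarrow> 'v \<Rightarrow> nat \<Rightarrow> bool"   \<comment> \<open>o_k responded b_{v_k} to a rw-read of p at time t\<close>
  req :: "nat \<Rightarrow> 'p \<Rightarrow> nat \<Rightarrow> bool"            \<comment> \<open>o_k received a signed read request of p at time t\<close>
  ainv :: "'p \<Rightarrow> nat \<Rightarrow> bool"                \<comment> \<open>p invoked an a-read at time t\<close>

record ('p, 'v) audit_run =
  a_start :: nat
  a_end :: nat
  resp :: "nat set"                            \<comment> \<open>objects whose rw-getLog responses were received\<close>
  log_time :: "nat \<Rightarrow> nat"                     \<comment> \<open>time at which o_k's rw-getLog took effect\<close>
  logs :: "nat \<Rightarrow> ('p \<times> 'v) set"              \<comment> \<open>L[k]: (valid) records received from o_k\<close>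

text \<open>Standing assumptions of the model (fault model, linearisable loggable registers,
correct readers only issue read requests within a-reads).\<close>
definition wf_exec :: "nat \<Rightarrow> nat \<Rightarrow> ('p, 'v) execution \<Rightarrow> bool" where
  "wf_exec n f e \<longleftrightarrow>
     faulty_obj e \<subseteq> {1..n} \<and> card (faulty_obj e) \<le> f \<and>
     (\<forall>k p v t. correct_rd e p \<longrightarrow> served e k p v t \<longrightarrow> (\<exists>t'\<le>t. req e k p t')) \<and>
     (\<forall>k p t. correct_rd e p \<longrightarrow> req e k p t \<longrightarrow> (\<exists>t'\<le>t. ainv e p t'))"

text \<open>Algorithm 1, step 1: responses from at least n-f objects, logs of correct objects
are exactly the records of the reads they served before the rw-getLog.\<close>
definition wf_audit :: "nat \<Rightarrow> nat \<Rightarrow> ('p, 'v) execution \<Rightarrow> ('p, 'v) audit_run \<Rightarrow> bool" where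
  "wf_audit n f e a \<longleftrightarrow>
     a_start a \<le> a_end a \<and> resp a \<subseteq> {1..n} \<and> card (resp a) \<ge> n - f \<and>
     (\<forall>k\<in>resp a. a_start a \<le> log_time a k \<and> log_time a k \<le> a_end a) \<and>
     (\<forall>k\<in>resp a. k \<notin> faulty_obj e \<longrightarrow>
        logs a k = {(p, v). \<exists>t < log_time a k. served e k p v t})"

text \<open>Signed reads: a faulty object cannot report a valid record about a correct reader
from which it has not received a signed request.\<close>
definition signed_reads :: "('p, 'v) execution \<Rightarrow> ('p, 'v) audit_run \<Rightarrow> bool" where
  "signed_reads e a \<longleftrightarrow>
     (\<forall>k\<in>resp a. \<forall>p v. correct_rd e p \<longrightarrow> (p, v) \<in> logs a k \<longrightarrow>
        (\<exists>t < log_time a k. req e k p t))"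

definition providing_set :: "nat \<Rightarrow> ('p, 'v) execution \<Rightarrow> 'p \<Rightarrow> 'v \<Rightarrow> nat \<Rightarrow> nat set" where
  "providing_set n e p v T =
     {k \<in> {1..n}. (\<exists>t < T. wrote e k v t) \<and> (\<exists>t < T. served e k p v t)}"

definition evid :: "('p, 'v) audit_run \<Rightarrow> 'p \<Rightarrow> 'v \<Rightarrow> nat set" where
  "evid a p v = {k \<in> resp a. (p, v) \<in> logs a k}"

text \<open>Output E_A of Algorithm 1 with threshold t, each evidence set tagged with its record.\<close>
definition audit_result :: "('p, 'v) audit_run \<Rightarrow> nat \<Rightarrow> (('p \<times> 'v) \<times> nat set) set" where
  "audit_result a t =
     {((p, v), evid a p v) | p v. (\<exists>k\<in>resp a. (p, v) \<in> logs a k) \<and> card (evid a p v) \<ge> t}"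

definition completeness :: "nat \<Rightarrow> nat \<Rightarrow> ('p, 'v) execution \<Rightarrow> ('p, 'v) audit_run \<Rightarrow> nat \<Rightarrow> bool" where
  "completeness n \<tau> e a t \<longleftrightarrow>
     (\<forall>p v. card (providing_set n e p v (a_start a)) \<ge> \<tau> \<longrightarrow>
        ((p, v), evid a p v) \<in> audit_result a t)"

definition weak_accuracy :: "('p, 'v) execution \<Rightarrow> ('p, 'v) audit_run \<Rightarrow> nat \<Rightarrow> bool" where
  "weak_accuracy e a t \<longleftrightarrow>
     (\<forall>p. correct_rd e p \<longrightarrow> \<not> (\<exists>t' \<le> a_end a. ainv e p t') \<longrightarrow>
        (\<forall>v. ((p, v), evid a p v) \<notin> audit_result a t))"

end

theory Submission
  imports Defs
begin

text \<open>Completeness: at least \<tau> - f \<ge> f + 1 objects of the providing set are correct, and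
any f + 1 of the n objects meet the n - f objects whose logs the auditor receives. A
correct object found this way logs the read it served before the audit, so the evidence
set is nonempty, which is all that threshold 1 asks for. Weak accuracy: a valid record
about a correct reader, even one reported by a faulty object, needs a signed request of
that reader, which it only issues inside an a-read begun before the log was returned.\<close>

lemma subsets_intersect_if_card_exceeds:
  assumes "finite U" and "A \<subseteq> U" and "B \<subseteq> U" and "card U < card A + card B"
  shows "A \<inter> B \<noteq> {}"
proof
  assume "A \<inter> B = {}"
  then have "card A + card B = card (A \<union> B)"
    using assms(1-3) by (simp add: card_Un_disjoint finite_subset)
  also have "\<dots> \<le> card U"
    using assms(1-3) by (simp add: card_mono)
  finally show False
    using assms(4) by linarith
qed

lemma correct_provider_responds:
  assumes "wf_exec n f e" and "wf_audit n f e a" and "\<tau> \<ge> 2 * f + 1"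
    and "card (providing_set n e p v T) \<ge> \<tau>"
  obtains k where "k \<in> providing_set n e p v T" and "k \<notin> faulty_obj e" and "k \<in> resp a"
proof -
  let ?P = "providing_set n e p v T" and ?F = "faulty_obj e"
  have "?F \<subseteq> {1..n}" and "card ?F \<le> f"
    using assms(1) by (auto simp: wf_exec_def)
  then have "card ?P - f \<le> card (?P - ?F)"
    using diff_card_le_card_Diff[of ?F ?P] finite_subset by fastforce
  moreover have "resp a \<subseteq> {1..n}" and "card (resp a) \<ge> n - f"
    using assms(2) by (auto simp: wf_audit_def)
  moreover have "?P - ?F \<subseteq> {1..n}"
    by (auto simp: providing_set_def)
  ultimately have "(?P - ?F) \<inter> resp a \<noteq> {}"
    using assms(3,4) by (intro subsets_intersect_if_card_exceeds[of "{1..n}"]) auto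
  then show thesis
    using that by blast
qed

lemma correct_responder_logs_served_read:
  assumes "wf_audit n f e a" and "k \<in> resp a" and "k \<notin> faulty_obj e"
    and "served e k p v t" and "t < a_start a"
  shows "(p, v) \<in> logs a k"
proof -
  have "logs a k = {(p, v). \<exists>t < log_time a k. served e k p v t}"
    and "a_start a \<le> log_time a k"
    using assms(1-3) by (auto simp: wf_audit_def)
  with assms(4,5) show ?thesis
    using less_le_trans by blast
qed

lemma audit_result_one_iff:
  assumes "finite (resp a)"
  shows "((p, v), evid a p v) \<in> audit_result a 1 \<longleftrightarrow> (\<exists>k\<in>resp a. (p, v) \<in> logs a k)"
proof -
  have "finite (evid a p v)"
    using assms by (simp add: evid_def)
  then have "card (evid a p v) \<ge> 1 \<longleftrightarrow> (\<exists>k\<in>resp a. (p, v) \<in> logs a k)"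
    by (auto simp: evid_def Suc_le_eq card_gt_0_iff)
  then show ?thesis
    by (auto simp: audit_result_def)
qed

lemma logged_correct_reader_invoked_read:
  assumes "wf_exec n f e" and "wf_audit n f e a" and "signed_reads e a"
    and "correct_rd e p" and "k \<in> resp a" and "(p, v) \<in> logs a k"
  shows "\<exists>t' \<le> a_end a. ainv e p t'"
proof -
  obtain t where "t < log_time a k" and "req e k p t"
    using assms(3-6) by (auto simp: signed_reads_def)
  moreover have "log_time a k \<le> a_end a"
    using assms(2,5) by (simp add: wf_audit_def)
  moreover have "\<exists>t'\<le>t. ainv e p t'"
    using assms(1,4) \<open>req e k p t\<close> by (auto simp: wf_exec_def)
  ultimately show ?thesis
    by (meson le_trans less_imp_le)
qed

theorem theorem4:
  fixes n f \<tau> :: nat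
    and e :: "('p, 'v) execution" and a :: "('p, 'v) audit_run"
  assumes "wf_exec n f e"
    and "wf_audit n f e a"
    and "signed_reads e a"
    and "\<tau> \<ge> 2 * f + 1"
  shows "completeness n \<tau> e a 1 \<and> weak_accuracy e a 1"
proof
  have fin: "finite (resp a)"
    using assms(2) by (auto simp: wf_audit_def intro: finite_subset)
  show "completeness n \<tau> e a 1"
    unfolding completeness_def
  proof (intro allI impI)
    fix p v
    assume "card (providing_set n e p v (a_start a)) \<ge> \<tau>"
    then obtain k where k: "k \<in> providing_set n e p v (a_start a)" "k \<notin> faulty_obj e" "k \<in> resp a"
      using correct_provider_responds assms(1,2,4) by metis
    then obtain t where "served e k p v t" and "t < a_start a"
      by (auto simp: providing_set_def)
    then have "(p, v) \<in> logs a k"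
      using correct_responder_logs_served_read[OF assms(2) k(3,2)] by blast
    then show "((p, v), evid a p v) \<in> audit_result a 1"
      using audit_result_one_iff[OF fin] k(3) by blast
  qed
  show "weak_accuracy e a 1"
    unfolding weak_accuracy_def audit_result_one_iff[OF fin]
    using logged_correct_reader_invoked_read[OF assms(1-3)] by blast
qed

end
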